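(* (i) For integers $p\geq 0$, $s\geq 2$, $t\geq 1$ and $n=s+t+p+1$, the graph $M_{n,n}^{s,t;-}$ is $2p$-Hamilton-biconnected. (ii) For integers $p\geq 0$ and $n\geq p+6$, the graph $N_{n,n}^{p,2}$ is $2p$-Hamilton-biconnected.
   Context: A bipartite graph $G=(X,Y;E)$ is balanced if $|X|=|Y|$; it is Hamilton-biconnected if for every $u\in X$, $v\in Y$ there is a Hamiltonian path with ends $u,v$. A vertex set $W$ is balanced if $|W\cap X|=|W\cap Y|$; $G$ is $2p$-Hamilton-biconnected if for every balanced $W$ with $|W|=2p$, the subgraph induced by $V(G)\setminus W$ is Hamilton-biconnected. $M_{n,m}^{s,t;-}$: the bipartite graph with parts $X=X_1\cup\{x_0\}\cup X_3$, $Y=Y_1\cup\{y_0\}\cup Y_3$ (disjoint), $|X_1|=s-1$, $|X_3|=n-s$, $|Y_1|=m-t-1$, $|Y_3|=t$, whose edges are all pairs between $X_1$ and $Y_1$, the edge $x_0y_0$, all pairs between $X_3$ and $Y_3$, all pairs between $x_0$ and $Y_1$, and all pairs between $X_3$ and $Y_1\cup\{y_0\}$. $N_{n,n}^{p,2}$: the balanced bipartite graph with parts $X=X_1\cup X_2\cup X_3$, $Y=Y_1\cup Y_2\cup Y_3$, $|X_1|=|Y_1|=n-p-3$, $|X_2|=|Y_2|=p+2$, $|X_3|=|Y_3|=1$, whose edges are all pairs between $X_1$ and $Y_1$, between $X_2$ and $Y_2$, between $X_1$ and $Y_2$, between $X_2$ and $Y_1\cup Y_3$, and between $X_3$ and $Y_2$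 (there is no edge between $X_3$ and $Y_3$). *)

theory Defs
  imports Main
begin

text \<open>A bipartite graph is given by its two (disjoint) parts X, Y and an adjacency
  relation E (assumed symmetric). The graph induced on a vertex set V uses the
  edges of E between vertices of V.\<close>

definition ham_path :: "('a \<Rightarrow> 'a \<Rightarrow> bool) \<Rightarrow> 'a set \<Rightarrow> 'a list \<Rightarrow> bool" where
  "ham_path E V xs \<longleftrightarrow> distinct xs \<and> set xs = V \<and>
     (\<forall>i. Suc i < length xs \<longrightarrow> E (xs ! i) (xs ! Suc i))"

definition hamilton_biconnected :: "'a set \<Rightarrow> 'a set \<Rightarrow> ('a \<Rightarrow> 'a \<Rightarrow> bool) \<Rightarrow> bool" where
  "hamilton_biconnected X Y E \<longleftrightarrow>
     (\<forall>u\<in>X. \<forall>v\<in>Y. \<exists>xs. ham_path E (X \<union> Y) xs \<and> xs \<noteq> [] \<and> hd xs = u \<and> last xs = v)"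

definition balanced_set :: "'a set \<Rightarrow> 'a set \<Rightarrow> 'a set \<Rightarrow> bool" where
  "balanced_set X Y W \<longleftrightarrow> card (W \<inter> X) = card (W \<inter> Y)"

definition hamilton_biconnected_2p :: "nat \<Rightarrow> 'a set \<Rightarrow> 'a set \<Rightarrow> ('a \<Rightarrow> 'a \<Rightarrow> bool) \<Rightarrow> bool" where
  "hamilton_biconnected_2p p X Y E \<longleftrightarrow>
     (\<forall>W. W \<subseteq> X \<union> Y \<and> finite W \<and> balanced_set X Y W \<and> card W = 2 * p \<longrightarrow>
          hamilton_biconnected (X - W) (Y - W) E)"

datatype mvert = MX1 nat | MX0 | MX3 nat | MY1 nat | MY0 | MY3 nat

definition M_X :: "nat \<Rightarrow> nat \<Rightarrow> nat \<Rightarrow> nat \<Rightarrow> mvert set" where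
  "M_X n m s t = {MX1 i | i. i < s - 1} \<union> {MX0} \<union> {MX3 i | i. i < n - s}"

definition M_Y :: "nat \<Rightarrow> nat \<Rightarrow> nat \<Rightarrow> nat \<Rightarrow> mvert set" where
  "M_Y n m s t = {MY1 i | i. i < m - t - 1} \<union> {MY0} \<union> {MY3 i | i. i < t}"

text \<open>Edges from the X side to the Y side (vertex ranges are enforced by M_X, M_Y).\<close>
fun M_adj0 :: "mvert \<Rightarrow> mvert \<Rightarrow> bool" where
  "M_adj0 (MX1 _) (MY1 _) = True"
| "M_adj0 MX0 MY0 = True"
| "M_adj0 (MX3 _) (MY3 _) = True"
| "M_adj0 MX0 (MY1 _) = True"
| "M_adj0 (MX3 _) (MY1 _) = True"
| "M_adj0 (MX3 _) MY0 = True"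
| "M_adj0 _ _ = False"

definition M_adj :: "mvert \<Rightarrow> mvert \<Rightarrow> bool" where
  "M_adj u v \<longleftrightarrow> M_adj0 u v \<or> M_adj0 v u"

datatype nvert = NX1 nat | NX2 nat | NX3 | NY1 nat | NY2 nat | NY3

definition N_X :: "nat \<Rightarrow> nat \<Rightarrow> nvert set" where
  "N_X n p = {NX1 i | i. i < n - p - 3} \<union> {NX2 i | i. i < p + 2} \<union> {NX3}"

definition N_Y :: "nat \<Rightarrow> nat \<Rightarrow> nvert set" where
  "N_Y n p = {NY1 i | i. i < n - p - 3} \<union> {NY2 i | i. i < p + 2} \<union> {NY3}"

fun N_adj0 :: "nvert \<Rightarrow> nvert \<Rightarrow> bool" where
  "N_adj0 (NX1 _) (NY1 _) = True"
| "N_adj0 (NX2 _) (NY2 _) = True"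
| "N_adj0 (NX1 _) (NY2 _) = True"
| "N_adj0 (NX2 _) (NY1 _) = True"
| "N_adj0 (NX2 _) NY3 = True"
| "N_adj0 NX3 (NY2 _) = True"
| "N_adj0 _ _ = False"

definition N_adj :: "nvert \<Rightarrow> nvert \<Rightarrow> bool" where
  "N_adj u v \<longleftrightarrow> N_adj0 u v \<or> N_adj0 v u"

end

theory Submission
  imports Defs
begin

text \<open>Both graphs are blow-ups of a six-vertex quotient graph on their vertex classes: each class
  is an independent set, and two vertices are adjacent iff their classes are. So, after deleting
  a balanced set W, a Hamiltonian path from u to v is the same thing as a walk in the quotient
  graph from the class of u to the class of v that visits every class exactly as often as it has
  surviving vertices. Such walks are built by induction on the number N of surviving vertices
  per side: replacing an occurrence of a class y in a walk by y x y, for a class x adjacent to y,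
  again gives a walk, with one more visit to x and to y. The size constraints of the paper
  always single out an adjacent pair of classes that can be removed in this way without
  violating the constraints for N - 1; the base case N = 4 is decided by exhaustive search.\<close>

definition counted_walk :: "('c \<Rightarrow> 'c \<Rightarrow> bool) \<Rightarrow> ('c \<Rightarrow> nat) \<Rightarrow> 'c \<Rightarrow> 'c \<Rightarrow> 'c list \<Rightarrow> bool" where
  "counted_walk R cnt st en w \<longleftrightarrow>
     w \<noteq> [] \<and> hd w = st \<and> last w = en \<and> successively R w \<and> (\<forall>c. count_list w c = cnt c)"

lemma counted_walk_insert_edge:
  assumes w: "counted_walk R cnt st en w" and R: "R x y" "R y x" and "x \<noteq> y" "1 \<le> cnt y"
  shows "\<exists>w'. counted_walk R (cnt(x := Suc (cnt x), y := Suc (cnt y))) st en w'"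
proof -
  have "count_list w y \<noteq> 0"
    using w \<open>1 \<le> cnt y\<close> by (simp add: counted_walk_def)
  then have "y \<in> set w" by (simp add: count_list_0_iff)
  then obtain as bs where w_split: "w = as @ y # bs" by (meson split_list)
  define w' where "w' = as @ y # x # y # bs"
  have "successively R as" "successively R (y # bs)" "as = [] \<or> R (last as) y"
    using w by (auto simp: counted_walk_def w_split successively_append_iff)
  then have "successively R w'"
    using R by (auto simp: w'_def successively_append_iff successively_Cons)
  moreover have "count_list w' c = (cnt(x := Suc (cnt x), y := Suc (cnt y))) c" for c
  proof -
    have "count_list w c = cnt c" using w by (simp add: counted_walk_def)
    then show ?thesis
      using \<open>x \<noteq> y\<close> by (cases "c = x"; cases "c = y") (auto simp: w_split w'_def)
  qed
  ultimately have "counted_walk R (cnt(x := Suc (cnt x), y := Suc (cnt y))) st en w'"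
    using w by (auto simp: counted_walk_def w_split w'_def hd_append split: list.splits)
  then show ?thesis by blast
qed

lemma counted_walk_by_edge_reduction:
  fixes Inv :: "nat \<Rightarrow> ('c \<Rightarrow> nat) \<Rightarrow> bool"
  assumes base: "\<And>cnt. Inv N\<^sub>0 cnt \<Longrightarrow> 1 \<le> cnt st \<Longrightarrow> 1 \<le> cnt en \<Longrightarrow>
      \<exists>w. counted_walk R cnt st en w"
    and step: "\<And>N cnt. N\<^sub>0 \<le> N \<Longrightarrow> Inv (Suc N) cnt \<Longrightarrow>
      \<exists>x y. R x y \<and> R y x \<and> x \<noteq> y \<and> 2 \<le> cnt x \<and> 2 \<le> cnt y \<and>
            Inv N (cnt(x := cnt x - 1, y := cnt y - 1))"
    and "N\<^sub>0 \<le> N" "Inv N cnt" "1 \<le> cnt st" "1 \<le> cnt en"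
  shows "\<exists>w. counted_walk R cnt st en w"
  using assms(3-6)
proof (induction N arbitrary: cnt rule: nat_induct_at_least)
  case base
  then show ?case by (rule assms(1))
next
  case (Suc N)
  obtain x y where xy: "R x y" "R y x" "x \<noteq> y" "2 \<le> cnt x" "2 \<le> cnt y"
    and inv: "Inv N (cnt(x := cnt x - 1, y := cnt y - 1))"
    using step[OF Suc.hyps(1) Suc.prems(1)] by blast
  define cnt' where "cnt' = cnt(x := cnt x - 1, y := cnt y - 1)"
  have "1 \<le> cnt' c" if "1 \<le> cnt c" for c
    using that xy(4,5) by (auto simp: cnt'_def)
  then obtain w where "counted_walk R cnt' st en w"
    using Suc.IH[OF inv] Suc.prems(2,3) unfolding cnt'_def by blast
  moreover have "1 \<le> cnt' y"
    using xy(3,5) by (simp add: cnt'_def)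
  ultimately obtain w' where "counted_walk R (cnt'(x := Suc (cnt' x), y := Suc (cnt' y))) st en w'"
    using counted_walk_insert_edge[OF _ xy(1-3)] by blast
  moreover have "cnt'(x := Suc (cnt' x), y := Suc (cnt' y)) = cnt"
    using xy(3-5) by (auto simp: cnt'_def fun_eq_iff)
  ultimately show ?case by auto
qed

(* Only the soundness of this enumeration is used: it decides the base cases by evaluation, and
   the budget b, which forbids entering a class more often than it may be visited, keeps that
   search small. *)
fun budget_walks :: "'c list \<Rightarrow> ('c \<Rightarrow> 'c \<Rightarrow> bool) \<Rightarrow> nat \<Rightarrow> ('c \<Rightarrow> nat) \<Rightarrow> 'c \<Rightarrow> 'c list list" where
  "budget_walks cs R 0 b c = [[c]]"
| "budget_walks cs R (Suc k) b c =
     concat (map (\<lambda>d. map ((#) c) (budget_walks cs R k (b(d := b d - 1)) d))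
       (filter (\<lambda>d. R c d \<and> 0 < b d) cs))"

lemma budget_walks_successively:
  "w \<in> set (budget_walks cs R k b c) \<Longrightarrow> w \<noteq> [] \<and> hd w = c \<and> successively R w"
proof (induction k arbitrary: b c w)
  case (Suc k)
  then obtain d v where "R c d" and "w = c # v"
    and v: "v \<in> set (budget_walks cs R k (b(d := b d - 1)) d)"
    by auto
  have "v \<noteq> []" "hd v = d" "successively R v"
    using Suc.IH[OF v] by simp_all
  then have "successively R (c # v)"
    using \<open>R c d\<close> by (simp add: successively_Cons)
  with \<open>w = c # v\<close> show ?case by simp
qed simp

lemma counted_walk_if_budget_walk:
  assumes "set cs = UNIV"
    and "\<exists>w\<in>set (budget_walks cs R k b st). last w = en \<and> (\<forall>c\<in>set cs. count_list w c = cnt c)"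
  shows "\<exists>w. counted_walk R cnt st en w"
proof -
  from assms(2) obtain w where w: "w \<in> set (budget_walks cs R k b st)" and "last w = en"
    and "\<forall>c\<in>set cs. count_list w c = cnt c"
    by blast
  with assms(1) budget_walks_successively[OF w] have "counted_walk R cnt st en w"
    by (simp add: counted_walk_def)
  then show ?thesis ..
qed

lemma card_fiber_Diff_singleton:
  assumes "finite V" "y \<in> V"
  shows "card {x\<in>V - {y}. f x = c} = card {x\<in>V. f x = c} - (if f y = c then 1 else 0)"
proof -
  have "{x\<in>V - {y}. f x = c} = {x\<in>V. f x = c} - {y}" by auto
  then show ?thesis using assms by (simp add: card_Diff_singleton_if)
qed

lemma exists_distinct_list_map_eq:
  assumes "finite V" "\<And>c. count_list w c = card {x\<in>V. f x = c}"
  shows "\<exists>xs. distinct xs \<and> set xs = V \<and> map f xs = w"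
  using assms
proof (induction w arbitrary: V)
  case Nil
  have "V = {}"
  proof (rule ccontr)
    assume "V \<noteq> {}"
    then obtain y where "y \<in> V" by blast
    then have "{x\<in>V. f x = f y} \<noteq> {}" by blast
    moreover have "card {x\<in>V. f x = f y} = 0"
      using Nil.prems(2)[of "f y"] by (metis count_list.simps(1))
    ultimately show False
      using Nil.prems(1) by auto
  qed
  then show ?case by simp
next
  case (Cons c w)
  have "card {x\<in>V. f x = c} \<noteq> 0"
    using Cons.prems(2)[of c] by simp
  then obtain y where y: "y \<in> V" "f y = c"
    by (metis (mono_tags, lifting) empty_Collect_eq card.empty)
  have "count_list w d = card {x\<in>V - {y}. f x = d}" for d
    using Cons.prems(2)[of d] card_fiber_Diff_singleton[OF Cons.prems(1) y(1), of f d] y(2)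
    by auto
  then obtain xs where "distinct xs" "set xs = V - {y}" "map f xs = w"
    using Cons.IH[of "V - {y}"] Cons.prems(1) by auto
  with y show ?case by (intro exI[of _ "y # xs"]) auto
qed

lemma ham_path_if_counted_walk:
  assumes fin: "finite V" and uv: "u \<in> V" "v \<in> V" "f u \<noteq> f v"
    and blowup: "\<And>a b. E a b = R (f a) (f b)"
    and w: "counted_walk R (\<lambda>c. card {x\<in>V. f x = c}) (f u) (f v) w"
  shows "\<exists>xs. ham_path E V xs \<and> xs \<noteq> [] \<and> hd xs = u \<and> last xs = v"
proof -
  obtain w' where w': "w = f u # w' @ [f v]"
    using w uv(3) unfolding counted_walk_def
    by (metis append_butlast_last_id hd_Cons_tl last.simps last_ConsL)
  have v: "v \<in> V - {u}" using uv by auto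
  have "count_list w' c = card {x\<in>V - {u} - {v}. f x = c}" for c
  proof -
    have "count_list w c = card {x\<in>V. f x = c}"
      using w by (simp add: counted_walk_def)
    then show ?thesis
      using card_fiber_Diff_singleton[OF fin uv(1), of f c]
        card_fiber_Diff_singleton[of "V - {u}" v f c] fin v uv(3)
      by (auto simp: w')
  qed
  then obtain xs where xs: "distinct xs" "set xs = V - {u} - {v}" "map f xs = w'"
    using exists_distinct_list_map_eq[of "V - {u} - {v}" w' f] fin by auto
  define ys where "ys = u # xs @ [v]"
  have "map f ys = w" by (simp add: ys_def w' xs(3))
  then have "successively R (map f ys)"
    using w by (simp add: counted_walk_def)
  then have "successively E ys"
    by (simp add: successively_map blowup)
  moreover have "distinct ys" "set ys = V"
    using xs uv by (auto simp: ys_def)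
  ultimately show ?thesis
    by (intro exI[of _ ys]) (simp add: ham_path_def successively_conv_nth ys_def)
qed

lemma hamilton_biconnected_if_class_walks:
  assumes fin: "finite (X \<union> Y)" and classes: "\<And>x y. x \<in> X \<Longrightarrow> y \<in> Y \<Longrightarrow> f x \<noteq> f y"
    and blowup: "\<And>a b. E a b = R (f a) (f b)"
    and walks: "\<And>u v. u \<in> X \<Longrightarrow> v \<in> Y \<Longrightarrow>
      \<exists>w. counted_walk R (\<lambda>c. card {x\<in>X \<union> Y. f x = c}) (f u) (f v) w"
  shows "hamilton_biconnected X Y E"
  unfolding hamilton_biconnected_def
proof (intro ballI)
  fix u v assume uv: "u \<in> X" "v \<in> Y"
  then obtain w where "counted_walk R (\<lambda>c. card {x\<in>X \<union> Y. f x = c}) (f u) (f v) w"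
    using walks by blast
  with ham_path_if_counted_walk[of "X \<union> Y" u v f E R w] fin classes[OF uv] blowup uv
  show "\<exists>xs. ham_path E (X \<union> Y) xs \<and> xs \<noteq> [] \<and> hd xs = u \<and> last xs = v"
    by blast
qed

lemma sum_card_fibers_Int:
  assumes "finite (A \<inter> X)" "finite C" "f ` X \<subseteq> C" "f ` (A - X) \<inter> C = {}"
  shows "(\<Sum>c\<in>C. card {a\<in>A. f a = c}) = card (A \<inter> X)"
proof -
  have "{a\<in>A. f a = c} = {a\<in>A \<inter> X. f a = c}" if "c \<in> C" for c
    using assms(4) that by blast
  then have "(\<Sum>c\<in>C. card {a\<in>A. f a = c}) = (\<Sum>c\<in>C. \<Sum>a\<in>{a\<in>A \<inter> X. f a = c}. 1::nat)"
    by simp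
  also have "\<dots> = card (A \<inter> X)"
    using sum.group[of "A \<inter> X" C f "\<lambda>_. 1::nat"] assms(1-3) by auto
  finally show ?thesis .
qed

lemma card_Int_balanced_set:
  assumes "W \<subseteq> X \<union> Y" "finite W" "X \<inter> Y = {}" "balanced_set X Y W" "card W = 2 * p"
  shows "card (W \<inter> X) = p" "card (W \<inter> Y) = p"
proof -
  have "W = (W \<inter> X) \<union> (W \<inter> Y)" using assms(1) by blast
  then have "card W = card (W \<inter> X) + card (W \<inter> Y)"
    using assms(2,3) card_Un_disjoint[of "W \<inter> X" "W \<inter> Y"] by auto
  then show "card (W \<inter> X) = p" "card (W \<inter> Y) = p"
    using assms(4,5) by (simp_all add: balanced_set_def)
qed

lemma hamilton_biconnected_2p_if_class_walks:
  fixes f :: "'v \<Rightarrow> 'c"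
  assumes fin: "finite X" "finite Y" "finite CX" "finite CY"
    and classes: "f ` X \<subseteq> CX" "f ` Y \<subseteq> CY" "CX \<inter> CY = {}"
    and blowup: "\<And>a b. E a b = R (f a) (f b)"
    and walks: "\<And>cnt st en. (\<And>c. cnt c \<le> card {v \<in> X \<union> Y. f v = c}) \<Longrightarrow>
      sum cnt CX = (\<Sum>c\<in>CX. card {v \<in> X \<union> Y. f v = c}) - p \<Longrightarrow>
      sum cnt CY = (\<Sum>c\<in>CY. card {v \<in> X \<union> Y. f v = c}) - p \<Longrightarrow>
      st \<in> CX \<Longrightarrow> en \<in> CY \<Longrightarrow> 1 \<le> cnt st \<Longrightarrow> 1 \<le> cnt en \<Longrightarrow>
      \<exists>w. counted_walk R cnt st en w"
  shows "hamilton_biconnected_2p p X Y E"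
  unfolding hamilton_biconnected_2p_def
proof (intro allI impI)
  fix W
  assume W: "W \<subseteq> X \<union> Y \<and> finite W \<and> balanced_set X Y W \<and> card W = 2 * p"
  have XY: "X \<inter> Y = {}" using classes by blast
  let ?V = "(X - W) \<union> (Y - W)"
  define cnt where "cnt = (\<lambda>c. card {v\<in>?V. f v = c})"
  have sum_X: "(\<Sum>c\<in>CX. card {v\<in>A. f v = c}) = card (A \<inter> X)"
    and sum_Y: "(\<Sum>c\<in>CY. card {v\<in>A. f v = c}) = card (A \<inter> Y)" if "A \<subseteq> X \<union> Y" for A
    using sum_card_fibers_Int[of A X CX f] sum_card_fibers_Int[of A Y CY f] that fin classes
    by blast+
  have "?V \<subseteq> X \<union> Y" "?V \<inter> X = X - W" "?V \<inter> Y = Y - W"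
    using XY by blast+
  then have "sum cnt CX = card (X - W)" "sum cnt CY = card (Y - W)"
    unfolding cnt_def by (simp_all only: sum_X sum_Y)
  moreover have "card X = (\<Sum>c\<in>CX. card {v \<in> X \<union> Y. f v = c})"
    "card Y = (\<Sum>c\<in>CY. card {v \<in> X \<union> Y. f v = c})"
    using sum_X[of "X \<union> Y"] sum_Y[of "X \<union> Y"] by (simp_all add: Int_absorb1)
  ultimately have sums: "sum cnt CX = (\<Sum>c\<in>CX. card {v \<in> X \<union> Y. f v = c}) - p"
    "sum cnt CY = (\<Sum>c\<in>CY. card {v \<in> X \<union> Y. f v = c}) - p"
    using card_Int_balanced_set[of W X Y p] W XY fin
    by (simp_all add: card_Diff_subset_Int Int_commute)
  have bounds: "cnt c \<le> card {v \<in> X \<union> Y. f v = c}" for c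
    unfolding cnt_def using fin by (intro card_mono) auto
  have pos: "1 \<le> cnt (f a)" if "a \<in> ?V" for a
  proof -
    have "a \<in> {v\<in>?V. f v = f a}" using that by blast
    moreover have "finite {v\<in>?V. f v = f a}"
      by (rule finite_subset[of _ "X \<union> Y"]) (use fin in auto)
    ultimately show ?thesis
      unfolding cnt_def by (metis One_nat_def Suc_leI card_gt_0_iff empty_iff)
  qed
  show "hamilton_biconnected (X - W) (Y - W) E"
  proof (rule hamilton_biconnected_if_class_walks[where f = f and R = R])
    show "finite ?V" using fin by blast
    show "f x \<noteq> f y" if "x \<in> X - W" "y \<in> Y - W" for x y
      using that classes by blast
    show "\<exists>w. counted_walk R (\<lambda>c. card {x\<in>?V. f x = c}) (f u) (f v) w"
      if "u \<in> X - W" "v \<in> Y - W" for u v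
      unfolding cnt_def[symmetric] using that classes pos by (intro walks[OF bounds sums]) auto
  qed (rule blowup)
qed

lemma card_setcompr_less: "inj g \<Longrightarrow> card {g i | i. i < k} = k"
  by (simp add: setcompr_eq_image card_image inj_on_subset)

datatype mclass = CX1 | CX0 | CX3 | CY1 | CY0 | CY3

definition mclasses :: "mclass list" where
  "mclasses = [CX1, CX0, CX3, CY1, CY0, CY3]"

lemma set_mclasses: "set mclasses = UNIV"
  using mclass.exhaust by (auto simp: mclasses_def)

fun mclass_of :: "mvert \<Rightarrow> mclass" where
  "mclass_of (MX1 _) = CX1" | "mclass_of MX0 = CX0" | "mclass_of (MX3 _) = CX3"
| "mclass_of (MY1 _) = CY1" | "mclass_of MY0 = CY0" | "mclass_of (MY3 _) = CY3"

fun M_cadj0 :: "mclass \<Rightarrow> mclass \<Rightarrow> bool" where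
  "M_cadj0 CX1 CY1 = True"
| "M_cadj0 CX0 CY0 = True"
| "M_cadj0 CX3 CY3 = True"
| "M_cadj0 CX0 CY1 = True"
| "M_cadj0 CX3 CY1 = True"
| "M_cadj0 CX3 CY0 = True"
| "M_cadj0 _ _ = False"

definition M_cadj :: "mclass \<Rightarrow> mclass \<Rightarrow> bool" where
  "M_cadj a b \<longleftrightarrow> M_cadj0 a b \<or> M_cadj0 b a"

lemma M_adj_eq_cadj: "M_adj a b = M_cadj (mclass_of a) (mclass_of b)"
  by (cases a; cases b) (simp_all add: M_adj_def M_cadj_def)

definition M_counts :: "nat \<Rightarrow> nat \<Rightarrow> nat \<Rightarrow> nat \<Rightarrow> nat \<Rightarrow> nat \<Rightarrow> mclass \<Rightarrow> nat" where
  "M_counts a1 a0 a3 b1 b0 b3 c =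
     (case c of CX1 \<Rightarrow> a1 | CX0 \<Rightarrow> a0 | CX3 \<Rightarrow> a3 | CY1 \<Rightarrow> b1 | CY0 \<Rightarrow> b0 | CY3 \<Rightarrow> b3)"

(* What the class sizes s - 1 of CX1, t of CY3 and 1 of CX0, CY0 imply for N = s + t + 1
   surviving vertices per side when s \<ge> 2 and t \<ge> 1. *)
definition M_admissible :: "nat \<Rightarrow> (mclass \<Rightarrow> nat) \<Rightarrow> bool" where
  "M_admissible N cnt \<longleftrightarrow>
     cnt CX1 + cnt CX0 + cnt CX3 = N \<and> cnt CY1 + cnt CY0 + cnt CY3 = N \<and>
     cnt CX1 + 3 \<le> N \<and> cnt CY3 + 3 \<le> N \<and> cnt CX1 + cnt CY3 + 2 \<le> N \<and>
     cnt CX0 \<le> 1 \<and> cnt CY0 \<le> 1"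

lemma M_budget_walks_4:
  "\<forall>a1\<in>{0,1}. \<forall>a0\<in>{0,1}. \<forall>b3\<in>{0,1}. \<forall>b0\<in>{0,1::nat}. \<forall>st\<in>{CX1,CX0,CX3}. \<forall>en\<in>{CY1,CY0,CY3}.
     let cnt = M_counts a1 a0 (4 - a1 - a0) (4 - b0 - b3) b0 b3 in
     1 \<le> cnt st \<longrightarrow> 1 \<le> cnt en \<longrightarrow>
     (\<exists>w\<in>set (budget_walks mclasses M_cadj 7 (cnt(st := cnt st - 1)) st).
        last w = en \<and> (\<forall>c\<in>set mclasses. count_list w c = cnt c))"
  by code_simp

lemma M_counted_walk_4:
  assumes adm: "M_admissible 4 cnt"
    and st: "st \<in> {CX1, CX0, CX3}" and en: "en \<in> {CY1, CY0, CY3}"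
    and pos: "1 \<le> cnt st" "1 \<le> cnt en"
  shows "\<exists>w. counted_walk M_cadj cnt st en w"
proof -
  have cnt: "cnt = M_counts (cnt CX1) (cnt CX0) (4 - cnt CX1 - cnt CX0)
      (4 - cnt CY0 - cnt CY3) (cnt CY0) (cnt CY3)"
    using adm by (auto simp: fun_eq_iff M_admissible_def M_counts_def split: mclass.split)
  have "cnt CX1 \<in> {0, 1}" "cnt CX0 \<in> {0, 1}" "cnt CY3 \<in> {0, 1}" "cnt CY0 \<in> {0, 1}"
    using adm by (auto simp: M_admissible_def)
  from M_budget_walks_4[rule_format, OF this st en, folded cnt, unfolded Let_def] pos
  have "\<exists>w\<in>set (budget_walks mclasses M_cadj 7 (cnt(st := cnt st - 1)) st).
      last w = en \<and> (\<forall>c\<in>set mclasses. count_list w c = cnt c)"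
    by blast
  then show ?thesis by (rule counted_walk_if_budget_walk[OF set_mclasses])
qed

lemma M_admissible_step:
  assumes "4 \<le> N" and adm: "M_admissible (Suc N) cnt"
  shows "\<exists>x y. M_cadj x y \<and> M_cadj y x \<and> x \<noteq> y \<and> 2 \<le> cnt x \<and> 2 \<le> cnt y \<and>
    M_admissible N (cnt(x := cnt x - 1, y := cnt y - 1))"
proof -
  consider "cnt CY3 + 3 = Suc N"
    | "cnt CY3 + 3 \<noteq> Suc N" "cnt CX1 + 3 = Suc N \<or> cnt CX1 + cnt CY3 + 2 = Suc N"
    | "cnt CY3 + 3 \<noteq> Suc N" "cnt CX1 + 3 \<noteq> Suc N" "cnt CX1 + cnt CY3 + 2 \<noteq> Suc N"
    by blast
  then show ?thesis
  proof cases
    case 1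
    then show ?thesis
      by (intro exI[of _ CX3] exI[of _ CY3]) (use assms in \<open>auto simp: M_admissible_def M_cadj_def\<close>)
  next
    case 2
    then show ?thesis
      by (intro exI[of _ CX1] exI[of _ CY1]) (use assms in \<open>auto simp: M_admissible_def M_cadj_def\<close>)
  next
    case 3
    then show ?thesis
      by (intro exI[of _ CX3] exI[of _ CY1]) (use assms in \<open>auto simp: M_admissible_def M_cadj_def\<close>)
  qed
qed

lemma M_counted_walk:
  assumes "4 \<le> N" "M_admissible N cnt" "st \<in> {CX1, CX0, CX3}" "en \<in> {CY1, CY0, CY3}"
    "1 \<le> cnt st" "1 \<le> cnt en"
  shows "\<exists>w. counted_walk M_cadj cnt st en w"
  using counted_walk_by_edge_reduction[where Inv = M_admissible and N\<^sub>0 = 4,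
      OF M_counted_walk_4[OF _ assms(3,4)] M_admissible_step] assms
  by blast

lemma M_class_card:
  "card {v \<in> M_X n m s t \<union> M_Y n m s t. mclass_of v = c} =
     (case c of CX1 \<Rightarrow> s - 1 | CX0 \<Rightarrow> 1 | CX3 \<Rightarrow> n - s
              | CY1 \<Rightarrow> m - t - 1 | CY0 \<Rightarrow> 1 | CY3 \<Rightarrow> t)"
proof -
  have "{v \<in> M_X n m s t \<union> M_Y n m s t. mclass_of v = c} =
     (case c of CX1 \<Rightarrow> {MX1 i | i. i < s - 1} | CX0 \<Rightarrow> {MX0} | CX3 \<Rightarrow> {MX3 i | i. i < n - s}
              | CY1 \<Rightarrow> {MY1 i | i. i < m - t - 1} | CY0 \<Rightarrow> {MY0} | CY3 \<Rightarrow> {MY3 i | i. i < t})"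
    by (cases c) (auto simp: M_X_def M_Y_def elim: mclass_of.elims)
  then show ?thesis
    by (cases c) (simp_all add: card_setcompr_less inj_def)
qed

lemma M_hamilton_biconnected_2p:
  assumes "2 \<le> s" "1 \<le> t" "n = s + t + p + 1"
  shows "hamilton_biconnected_2p p (M_X n n s t) (M_Y n n s t) M_adj"
proof (rule hamilton_biconnected_2p_if_class_walks
    [where f = mclass_of and R = M_cadj and CX = "{CX1, CX0, CX3}" and CY = "{CY1, CY0, CY3}"])
  show "finite (M_X n n s t)" "finite (M_Y n n s t)"
    by (simp_all add: M_X_def M_Y_def setcompr_eq_image)
  show "mclass_of ` M_X n n s t \<subseteq> {CX1, CX0, CX3}" "mclass_of ` M_Y n n s t \<subseteq> {CY1, CY0, CY3}"
    by (auto simp: M_X_def M_Y_def)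
  fix cnt st en
  assume bounds: "\<And>c. cnt c \<le> card {v \<in> M_X n n s t \<union> M_Y n n s t. mclass_of v = c}"
    and sums: "sum cnt {CX1, CX0, CX3} =
      (\<Sum>c\<in>{CX1, CX0, CX3}. card {v \<in> M_X n n s t \<union> M_Y n n s t. mclass_of v = c}) - p"
      "sum cnt {CY1, CY0, CY3} =
      (\<Sum>c\<in>{CY1, CY0, CY3}. card {v \<in> M_X n n s t \<union> M_Y n n s t. mclass_of v = c}) - p"
    and ends: "st \<in> {CX1, CX0, CX3}" "en \<in> {CY1, CY0, CY3}" "1 \<le> cnt st" "1 \<le> cnt en"
  have "cnt CX1 \<le> s - 1" "cnt CX0 \<le> 1" "cnt CY0 \<le> 1" "cnt CY3 \<le> t"
    using bounds[of CX1] bounds[of CX0] bounds[of CY0] bounds[of CY3]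
    unfolding M_class_card by simp_all
  with sums have "M_admissible (n - p) cnt"
    using assms unfolding M_class_card by (auto simp: M_admissible_def)
  moreover have "4 \<le> n - p" using assms by simp
  ultimately show "\<exists>w. counted_walk M_cadj cnt st en w"
    using M_counted_walk ends by blast
qed (simp_all add: M_adj_eq_cadj)

datatype nclass = DX1 | DX2 | DX3 | DY1 | DY2 | DY3

definition nclasses :: "nclass list" where
  "nclasses = [DX1, DX2, DX3, DY1, DY2, DY3]"

lemma set_nclasses: "set nclasses = UNIV"
  using nclass.exhaust by (auto simp: nclasses_def)

fun nclass_of :: "nvert \<Rightarrow> nclass" where
  "nclass_of (NX1 _) = DX1" | "nclass_of (NX2 _) = DX2" | "nclass_of NX3 = DX3"
| "nclass_of (NY1 _) = DY1" | "nclass_of (NY2 _) = DY2" | "nclass_of NY3 = DY3"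

fun N_cadj0 :: "nclass \<Rightarrow> nclass \<Rightarrow> bool" where
  "N_cadj0 DX1 DY1 = True"
| "N_cadj0 DX2 DY2 = True"
| "N_cadj0 DX1 DY2 = True"
| "N_cadj0 DX2 DY1 = True"
| "N_cadj0 DX2 DY3 = True"
| "N_cadj0 DX3 DY2 = True"
| "N_cadj0 _ _ = False"

definition N_cadj :: "nclass \<Rightarrow> nclass \<Rightarrow> bool" where
  "N_cadj a b \<longleftrightarrow> N_cadj0 a b \<or> N_cadj0 b a"

lemma N_adj_eq_cadj: "N_adj a b = N_cadj (nclass_of a) (nclass_of b)"
  by (cases a; cases b) (simp_all add: N_adj_def N_cadj_def)

definition N_counts :: "nat \<Rightarrow> nat \<Rightarrow> nat \<Rightarrow> nat \<Rightarrow> nat \<Rightarrow> nat \<Rightarrow> nclass \<Rightarrow> nat" where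
  "N_counts a1 a2 a3 b1 b2 b3 c =
     (case c of DX1 \<Rightarrow> a1 | DX2 \<Rightarrow> a2 | DX3 \<Rightarrow> a3 | DY1 \<Rightarrow> b1 | DY2 \<Rightarrow> b2 | DY3 \<Rightarrow> b3)"

definition N_admissible :: "nat \<Rightarrow> (nclass \<Rightarrow> nat) \<Rightarrow> bool" where
  "N_admissible N cnt \<longleftrightarrow>
     cnt DX1 + cnt DX2 + cnt DX3 = N \<and> cnt DY1 + cnt DY2 + cnt DY3 = N \<and>
     cnt DX1 + 3 \<le> N \<and> cnt DY1 + 3 \<le> N \<and> cnt DX3 \<le> 1 \<and> cnt DY3 \<le> 1"

lemma N_budget_walks_4:
  "\<forall>a1\<in>{0,1}. \<forall>a3\<in>{0,1}. \<forall>b1\<in>{0,1}. \<forall>b3\<in>{0,1::nat}. \<forall>st\<in>{DX1,DX2,DX3}. \<forall>en\<in>{DY1,DY2,DY3}.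
     let cnt = N_counts a1 (4 - a1 - a3) a3 b1 (4 - b1 - b3) b3 in
     1 \<le> cnt st \<longrightarrow> 1 \<le> cnt en \<longrightarrow>
     (\<exists>w\<in>set (budget_walks nclasses N_cadj 7 (cnt(st := cnt st - 1)) st).
        last w = en \<and> (\<forall>c\<in>set nclasses. count_list w c = cnt c))"
  by code_simp

lemma N_counted_walk_4:
  assumes adm: "N_admissible 4 cnt"
    and st: "st \<in> {DX1, DX2, DX3}" and en: "en \<in> {DY1, DY2, DY3}"
    and pos: "1 \<le> cnt st" "1 \<le> cnt en"
  shows "\<exists>w. counted_walk N_cadj cnt st en w"
proof -
  have cnt: "cnt = N_counts (cnt DX1) (4 - cnt DX1 - cnt DX3) (cnt DX3)
      (cnt DY1) (4 - cnt DY1 - cnt DY3) (cnt DY3)"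
    using adm by (auto simp: fun_eq_iff N_admissible_def N_counts_def split: nclass.split)
  have "cnt DX1 \<in> {0, 1}" "cnt DX3 \<in> {0, 1}" "cnt DY1 \<in> {0, 1}" "cnt DY3 \<in> {0, 1}"
    using adm by (auto simp: N_admissible_def)
  from N_budget_walks_4[rule_format, OF this st en, folded cnt, unfolded Let_def] pos
  have "\<exists>w\<in>set (budget_walks nclasses N_cadj 7 (cnt(st := cnt st - 1)) st).
      last w = en \<and> (\<forall>c\<in>set nclasses. count_list w c = cnt c)"
    by blast
  then show ?thesis by (rule counted_walk_if_budget_walk[OF set_nclasses])
qed

lemma N_admissible_step:
  assumes "4 \<le> N" and adm: "N_admissible (Suc N) cnt"
  shows "\<exists>x y. N_cadj x y \<and> N_cadj y x \<and> x \<noteq> y \<and> 2 \<le> cnt x \<and> 2 \<le> cnt y \<and>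
    N_admissible N (cnt(x := cnt x - 1, y := cnt y - 1))"
proof -
  let ?x = "if cnt DX1 + 3 = Suc N then DX1 else DX2"
  let ?y = "if cnt DY1 + 3 = Suc N then DY1 else DY2"
  show ?thesis
    by (intro exI[of _ ?x] exI[of _ ?y]) (use assms in \<open>auto simp: N_admissible_def N_cadj_def\<close>)
qed

lemma N_counted_walk:
  assumes "4 \<le> N" "N_admissible N cnt" "st \<in> {DX1, DX2, DX3}" "en \<in> {DY1, DY2, DY3}"
    "1 \<le> cnt st" "1 \<le> cnt en"
  shows "\<exists>w. counted_walk N_cadj cnt st en w"
  using counted_walk_by_edge_reduction[where Inv = N_admissible and N\<^sub>0 = 4,
      OF N_counted_walk_4[OF _ assms(3,4)] N_admissible_step] assms
  by blast

lemma N_class_card: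
  "card {v \<in> N_X n p \<union> N_Y n p. nclass_of v = c} =
     (case c of DX1 \<Rightarrow> n - p - 3 | DX2 \<Rightarrow> p + 2 | DX3 \<Rightarrow> 1
              | DY1 \<Rightarrow> n - p - 3 | DY2 \<Rightarrow> p + 2 | DY3 \<Rightarrow> 1)"
proof -
  have "{v \<in> N_X n p \<union> N_Y n p. nclass_of v = c} =
     (case c of DX1 \<Rightarrow> {NX1 i | i. i < n - p - 3} | DX2 \<Rightarrow> {NX2 i | i. i < p + 2} | DX3 \<Rightarrow> {NX3}
              | DY1 \<Rightarrow> {NY1 i | i. i < n - p - 3} | DY2 \<Rightarrow> {NY2 i | i. i < p + 2} | DY3 \<Rightarrow> {NY3})"
    by (cases c) (auto simp: N_X_def N_Y_def elim: nclass_of.elims)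
  then show ?thesis
    by (cases c) (simp_all add: card_setcompr_less inj_def)
qed

lemma N_hamilton_biconnected_2p:
  assumes "p + 6 \<le> n"
  shows "hamilton_biconnected_2p p (N_X n p) (N_Y n p) N_adj"
proof (rule hamilton_biconnected_2p_if_class_walks
    [where f = nclass_of and R = N_cadj and CX = "{DX1, DX2, DX3}" and CY = "{DY1, DY2, DY3}"])
  show "finite (N_X n p)" "finite (N_Y n p)"
    by (simp_all add: N_X_def N_Y_def setcompr_eq_image)
  show "nclass_of ` N_X n p \<subseteq> {DX1, DX2, DX3}" "nclass_of ` N_Y n p \<subseteq> {DY1, DY2, DY3}"
    by (auto simp: N_X_def N_Y_def)
  fix cnt st en
  assume bounds: "\<And>c. cnt c \<le> card {v \<in> N_X n p \<union> N_Y n p. nclass_of v = c}"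
    and sums: "sum cnt {DX1, DX2, DX3} =
      (\<Sum>c\<in>{DX1, DX2, DX3}. card {v \<in> N_X n p \<union> N_Y n p. nclass_of v = c}) - p"
      "sum cnt {DY1, DY2, DY3} =
      (\<Sum>c\<in>{DY1, DY2, DY3}. card {v \<in> N_X n p \<union> N_Y n p. nclass_of v = c}) - p"
    and ends: "st \<in> {DX1, DX2, DX3}" "en \<in> {DY1, DY2, DY3}" "1 \<le> cnt st" "1 \<le> cnt en"
  have "cnt DX1 \<le> n - p - 3" "cnt DX3 \<le> 1" "cnt DY1 \<le> n - p - 3" "cnt DY3 \<le> 1"
    using bounds[of DX1] bounds[of DX3] bounds[of DY1] bounds[of DY3]
    unfolding N_class_card by simp_all
  with sums have "N_admissible (n - p) cnt"
    using assms unfolding N_class_card by (auto simp: N_admissible_def)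
  moreover have "4 \<le> n - p" using assms by simp
  ultimately show "\<exists>w. counted_walk N_cadj cnt st en w"
    using N_counted_walk ends by blast
qed (simp_all add: N_adj_eq_cadj)

theorem lemma2p7:
  shows "(\<forall>p s t n :: nat. s \<ge> 2 \<and> t \<ge> 1 \<and> n = s + t + p + 1 \<longrightarrow>
            hamilton_biconnected_2p p (M_X n n s t) (M_Y n n s t) M_adj)
       \<and> (\<forall>p n :: nat. n \<ge> p + 6 \<longrightarrow>
            hamilton_biconnected_2p p (N_X n p) (N_Y n p) N_adj)"
  using M_hamilton_biconnected_2p N_hamilton_biconnected_2p by auto

end
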